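(* Let $X$ and $Y$ be random variables taking values in the finite sets $\mathcal{X}=\{1,\dots,M\}$ and $\mathcal{Y}=\{1,\dots,N\}$, with joint distribution $P_{XY}$. For $\varepsilon\in[\mathsf{P}_{\mathsf{c}}(X),\mathsf{P}_{\mathsf{c}}(X|Y)]$ define $$\mathcal{h}(\varepsilon)=\sup\left\{\mathsf{P}_{\mathsf{c}}(Y|Z)\;:\;P_{Z|Y},\ X - Y - Z,\ \mathsf{P}_{\mathsf{c}}(X|Z)\le\varepsilon\right\},$$ where the supremum is over all channels $P_{Z|Y}$ into a finite alphabet $\mathcal{Z}$ such that $X,Y,Z$ form a Markov chain $X - Y - Z$. Then $\mathcal{h}$ is piecewise linear on $[\mathsf{P}_{\mathsf{c}}(X),\mathsf{P}_{\mathsf{c}}(X|Y)]$: there exist an integer $K\ge 1$ and thresholds $\mathsf{P}_{\mathsf{c}}(X)=\varepsilon_0\le\varepsilon_1\le\dots\le\varepsilon_K=\mathsf{P}_{\mathsf{c}}(X|Y)$ such that $\mathcal{h}$ is linear (affine) on $[\varepsilon_{i-1},\varepsilon_i]$ for each $i=1,\dots,K$.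
   Context: For a discrete random variable $X$, $\mathsf{P}_{\mathsf{c}}(X)=\max_x P_X(x)$ is the probability of correctly guessing $X$. For jointly distributed discrete $X,Z$, $\mathsf{P}_{\mathsf{c}}(X|Z)=\sum_{z}\max_{x}P_{XZ}(x,z)=\sum_z P_Z(z)\max_x P_{X|Z}(x|z)$ is the probability of correctly guessing $X$ from $Z$. $X - Y - Z$ means $X$ and $Z$ are conditionally independent given $Y$ (the channel $P_{Z|Y}$ acts on $Y$ only). *)

theory Defs
  imports Complex_Main
begin

text \<open>Alphabets: X in {1..M}, Y in {1..N}, Z in {1..L}.
  The joint pmf of (X,Y) is P x y; a channel P_{Z|Y} is W y z.
  Under the Markov chain X - Y - Z, P_{XYZ}(x,y,z) = P x y * W y z.\<close>

definition joint_pmf :: "nat \<Rightarrow> nat \<Rightarrow> (nat \<Rightarrow> nat \<Rightarrow> real) \<Rightarrow> bool" where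
  "joint_pmf M N P \<longleftrightarrow> (\<forall>x\<in>{1..M}. \<forall>y\<in>{1..N}. P x y \<ge> 0)
     \<and> (\<Sum>x=1..M. \<Sum>y=1..N. P x y) = 1"

definition channel :: "nat \<Rightarrow> nat \<Rightarrow> (nat \<Rightarrow> nat \<Rightarrow> real) \<Rightarrow> bool" where
  "channel N L W \<longleftrightarrow> (\<forall>y\<in>{1..N}. (\<forall>z\<in>{1..L}. W y z \<ge> 0) \<and> (\<Sum>z=1..L. W y z) = 1)"

definition Pc_X :: "nat \<Rightarrow> nat \<Rightarrow> (nat \<Rightarrow> nat \<Rightarrow> real) \<Rightarrow> real" where
  "Pc_X M N P = Max ((\<lambda>x. \<Sum>y=1..N. P x y) ` {1..M})"

definition Pc_X_given_Y :: "nat \<Rightarrow> nat \<Rightarrow> (nat \<Rightarrow> nat \<Rightarrow> real) \<Rightarrow> real" where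
  "Pc_X_given_Y M N P = (\<Sum>y=1..N. Max ((\<lambda>x. P x y) ` {1..M}))"

definition Pc_X_given_Z ::
  "nat \<Rightarrow> nat \<Rightarrow> (nat \<Rightarrow> nat \<Rightarrow> real) \<Rightarrow> nat \<Rightarrow> (nat \<Rightarrow> nat \<Rightarrow> real) \<Rightarrow> real" where
  "Pc_X_given_Z M N P L W = (\<Sum>z=1..L. Max ((\<lambda>x. \<Sum>y=1..N. P x y * W y z) ` {1..M}))"

definition Pc_Y_given_Z ::
  "nat \<Rightarrow> nat \<Rightarrow> (nat \<Rightarrow> nat \<Rightarrow> real) \<Rightarrow> nat \<Rightarrow> (nat \<Rightarrow> nat \<Rightarrow> real) \<Rightarrow> real" where
  "Pc_Y_given_Z M N P L W = (\<Sum>z=1..L. Max ((\<lambda>y. \<Sum>x=1..M. P x y * W y z) ` {1..N}))"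

definition hfun :: "nat \<Rightarrow> nat \<Rightarrow> (nat \<Rightarrow> nat \<Rightarrow> real) \<Rightarrow> real \<Rightarrow> real" where
  "hfun M N P \<epsilon> = Sup {Pc_Y_given_Z M N P L W | L W.
      channel N L W \<and> Pc_X_given_Z M N P L W \<le> \<epsilon>}"

end

theory Submission
  imports Defs
begin

(* Relabelling every output of a channel P_{Z|Y} by its maximum a posteriori estimate of Y
   neither increases P_c(X|Z) nor changes P_c(Y|Z), so h(epsilon) is attained by channels W into
   {1..N}, decoded by the identity, whose success probability sum_y P_Y(y) W(y,y) is linear in W.
   The pairs (epsilon, t) achievable by such channels are the projection of a polyhedron in the
   variables epsilon, t, W and upper bounds for the maxima defining P_c(X|Z); by Fourier-Motzkin
   elimination this projection is again a polyhedron. Hence h(epsilon), the largest achievable t,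
   is the minimum of finitely many affine functions of epsilon, and such a minimum is piecewise
   affine. *)

section \<open>Fourier-Motzkin elimination\<close>

definition lin_sat :: "'v set \<Rightarrow> (('v \<Rightarrow> real) \<times> real) set \<Rightarrow> ('v \<Rightarrow> real) \<Rightarrow> bool" where
  "lin_sat V C u \<longleftrightarrow> (\<forall>p\<in>C. (\<Sum>i\<in>V. fst p i * u i) \<le> snd p)"

lemma lin_sat_cong:
  assumes "\<And>i. i \<in> V \<Longrightarrow> u i = u' i"
  shows "lin_sat V C u = lin_sat V C u'"
  using assms unfolding lin_sat_def by (simp cong: sum.cong)

lemma lin_sat_Un: "lin_sat V (A \<union> B) u \<longleftrightarrow> lin_sat V A u \<and> lin_sat V B u"
  unfolding lin_sat_def by blast

lemma lin_sat_UN: "lin_sat V (\<Union>s\<in>S. A s) u \<longleftrightarrow> (\<forall>s\<in>S. lin_sat V (A s) u)"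
  unfolding lin_sat_def by blast

lemma lin_sat_image:
  "lin_sat V (f ` S) u \<longleftrightarrow> (\<forall>s\<in>S. (\<Sum>i\<in>V. fst (f s) i * u i) \<le> snd (f s))"
  unfolding lin_sat_def by blast

lemma lin_sat_singleton: "lin_sat V {(c, d)} u \<longleftrightarrow> (\<Sum>i\<in>V. c i * u i) \<le> d"
  unfolding lin_sat_def by auto

definition lin_eq :: "('v \<Rightarrow> real) \<Rightarrow> real \<Rightarrow> (('v \<Rightarrow> real) \<times> real) set" where
  "lin_eq c d = {(c, d), (\<lambda>i. - c i, - d)}"

lemma lin_sat_lin_eq: "lin_sat V (lin_eq c d) u \<longleftrightarrow> (\<Sum>i\<in>V. c i * u i) = d"
  unfolding lin_sat_def lin_eq_def by (auto simp: sum_negf)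

lemma sum_fun_upd_remove:
  assumes "finite V" "x \<in> V"
  shows "(\<Sum>i\<in>V. c i * (u(x := r)) i) = c x * r + (\<Sum>i\<in>V - {x}. c i * u i)"
proof -
  have "(\<Sum>i\<in>V - {x}. c i * (u(x := r)) i) = (\<Sum>i\<in>V - {x}. c i * u i)"
    by (rule sum.cong) auto
  then show ?thesis using assms by (simp add: sum.remove)
qed

definition fm_combine ::
  "'v \<Rightarrow> ('v \<Rightarrow> real) \<times> real \<Rightarrow> ('v \<Rightarrow> real) \<times> real \<Rightarrow> ('v \<Rightarrow> real) \<times> real" where
  "fm_combine x p q =
     ((\<lambda>i. - fst q x * fst p i + fst p x * fst q i), - fst q x * snd p + fst p x * snd q)"

definition fm_eliminate :: "'v \<Rightarrow> (('v \<Rightarrow> real) \<times> real) set \<Rightarrow> (('v \<Rightarrow> real) \<times> real) set" where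
  "fm_eliminate x C = {p \<in> C. fst p x = 0}
     \<union> (\<lambda>(p, q). fm_combine x p q) ` ({p \<in> C. fst p x > 0} \<times> {q \<in> C. fst q x < 0})"

lemma finite_fm_eliminate: "finite C \<Longrightarrow> finite (fm_eliminate x C)"
  unfolding fm_eliminate_def by auto

lemma fm_eliminateE:
  assumes "p \<in> fm_eliminate x C"
  obtains "p \<in> C" "fst p x = 0"
  | p' q where "p' \<in> C" "fst p' x > 0" "q \<in> C" "fst q x < 0" "p = fm_combine x p' q"
  using assms unfolding fm_eliminate_def by auto

lemma sum_fm_combine:
  "(\<Sum>i\<in>V. fst (fm_combine x p q) i * u i)
     = - fst q x * (\<Sum>i\<in>V. fst p i * u i) + fst p x * (\<Sum>i\<in>V. fst q i * u i)"
  unfolding sum_distrib_left sum.distrib[symmetric]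
  by (rule sum.cong) (simp_all add: fm_combine_def algebra_simps)

lemma lin_sat_fm_eliminate_if_extension:
  assumes "finite V" "x \<in> V" "lin_sat V C (u(x := r))"
  shows "lin_sat (V - {x}) (fm_eliminate x C) u"
proof -
  let ?s = "\<lambda>c. \<Sum>i\<in>V - {x}. c i * u i"
  have ineq: "fst p x * r + ?s (fst p) \<le> snd p" if "p \<in> C" for p
    using assms(3) that unfolding lin_sat_def sum_fun_upd_remove[OF assms(1,2)] by auto
  have "?s (fst (fm_combine x p q)) \<le> snd (fm_combine x p q)"
    if "p \<in> C" "fst p x > 0" "q \<in> C" "fst q x < 0" for p q
  proof -
    have "- fst q x * (fst p x * r + ?s (fst p)) \<le> - fst q x * snd p"
      using ineq that by (intro mult_left_mono) auto
    moreover have "fst p x * (fst q x * r + ?s (fst q)) \<le> fst p x * snd q"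
      using ineq that by (intro mult_left_mono) auto
    ultimately show ?thesis
      unfolding sum_fm_combine by (simp add: fm_combine_def algebra_simps)
  qed
  moreover have "?s (fst p) \<le> snd p" if "p \<in> C" "fst p x = 0" for p
    using ineq[OF that(1)] that(2) by simp
  ultimately show ?thesis
    unfolding lin_sat_def by (blast elim: fm_eliminateE)
qed

lemma exists_between_finite:
  fixes A B :: "real set"
  assumes "finite A" "finite B" "\<forall>a\<in>A. \<forall>b\<in>B. a \<le> b"
  shows "\<exists>r. (\<forall>a\<in>A. a \<le> r) \<and> (\<forall>b\<in>B. r \<le> b)"
proof (cases "A = {}")
  case True
  then show ?thesis
    using assms by (cases "B = {}") (auto intro!: exI[of _ "Min B"])
next
  case False
  then show ?thesis using assms by (intro exI[of _ "Max A"]) auto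
qed

definition fm_bound :: "'v set \<Rightarrow> 'v \<Rightarrow> ('v \<Rightarrow> real) \<Rightarrow> ('v \<Rightarrow> real) \<times> real \<Rightarrow> real" where
  "fm_bound V x u p = (snd p - (\<Sum>i\<in>V - {x}. fst p i * u i)) / fst p x"

lemma fm_bound_le:
  assumes "lin_sat (V - {x}) (fm_eliminate x C) u"
    and p: "p \<in> C" "fst p x > 0" and q: "q \<in> C" "fst q x < 0"
  shows "fm_bound V x u q \<le> fm_bound V x u p"
proof -
  let ?s = "\<lambda>c. \<Sum>i\<in>V - {x}. c i * u i"
  have "fm_combine x p q \<in> fm_eliminate x C"
    unfolding fm_eliminate_def using p q by auto
  then have "?s (fst (fm_combine x p q)) \<le> snd (fm_combine x p q)"
    using assms(1) unfolding lin_sat_def by blast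
  then have "- fst q x * ?s (fst p) + fst p x * ?s (fst q) \<le> - fst q x * snd p + fst p x * snd q"
    unfolding sum_fm_combine by (simp add: fm_combine_def)
  then show ?thesis unfolding fm_bound_def using p(2) q(2)
    by (simp add: divide_simps) (simp add: algebra_simps)
qed

lemma extension_if_lin_sat_fm_eliminate:
  assumes "finite V" "x \<in> V" "finite C" and sat: "lin_sat (V - {x}) (fm_eliminate x C) u"
  shows "\<exists>r. lin_sat V C (u(x := r))"
proof -
  let ?s = "\<lambda>c. \<Sum>i\<in>V - {x}. c i * u i"
  let ?bound = "fm_bound V x u"
  define Lo where "Lo = ?bound ` {q \<in> C. fst q x < 0}"
  define Up where "Up = ?bound ` {p \<in> C. fst p x > 0}"
  have "\<forall>a\<in>Lo. \<forall>b\<in>Up. a \<le> b" unfolding Lo_def Up_def using fm_bound_le[OF sat] by blast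
  moreover have "finite Lo" "finite Up" unfolding Lo_def Up_def using assms(3) by auto
  ultimately obtain r where r: "\<forall>a\<in>Lo. a \<le> r" "\<forall>b\<in>Up. r \<le> b"
    using exists_between_finite by metis
  have "fst p x * r + ?s (fst p) \<le> snd p" if "p \<in> C" for p
  proof (cases "fst p x" "0::real" rule: linorder_cases)
    case less
    then have "?bound p \<in> Lo" unfolding Lo_def using that by (intro imageI) simp
    then have "?bound p \<le> r" using r(1) by blast
    then show ?thesis using less by (simp add: fm_bound_def neg_divide_le_eq algebra_simps)
  next
    case equal
    then have "p \<in> fm_eliminate x C" using that unfolding fm_eliminate_def by auto
    then show ?thesis using sat equal unfolding lin_sat_def by simp
  next
    case greater
    then have "?bound p \<in> Up" unfolding Up_def using that by (intro imageI) simp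
    then have "r \<le> ?bound p" using r(2) by blast
    then show ?thesis using greater by (simp add: fm_bound_def pos_le_divide_eq algebra_simps)
  qed
  then have "lin_sat V C (u(x := r))"
    unfolding lin_sat_def sum_fun_upd_remove[OF assms(1,2)] by auto
  then show ?thesis by blast
qed

lemma lin_sat_fm_eliminate_iff:
  assumes "finite V" "x \<in> V" "finite C"
  shows "lin_sat (V - {x}) (fm_eliminate x C) u \<longleftrightarrow> (\<exists>r. lin_sat V C (u(x := r)))"
  using lin_sat_fm_eliminate_if_extension[OF assms(1,2)]
    extension_if_lin_sat_fm_eliminate[OF assms] by blast

lemma ex_agree_on_fun_upd:
  assumes "x \<in> A"
  shows "(\<exists>r u'. (\<forall>i\<in>A. u' i = (u(x := r)) i) \<and> Q u') \<longleftrightarrow> (\<exists>u'. (\<forall>i\<in>A - {x}. u' i = u i) \<and> Q u')"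
proof
  assume "\<exists>r u'. (\<forall>i\<in>A. u' i = (u(x := r)) i) \<and> Q u'"
  then obtain r u' where "\<forall>i\<in>A. u' i = (u(x := r)) i" "Q u'" by blast
  then show "\<exists>u'. (\<forall>i\<in>A - {x}. u' i = u i) \<and> Q u'" by (intro exI[of _ u']) auto
next
  assume "\<exists>u'. (\<forall>i\<in>A - {x}. u' i = u i) \<and> Q u'"
  then obtain u' where "\<forall>i\<in>A - {x}. u' i = u i" "Q u'" by blast
  then show "\<exists>r u'. (\<forall>i\<in>A. u' i = (u(x := r)) i) \<and> Q u'"
    by (intro exI[of _ "u' x"] exI[of _ u']) auto
qed

lemma fourier_motzkin:
  assumes "finite V" "finite C" "E \<subseteq> V"
  shows "\<exists>C'. finite C' \<and>
    (\<forall>u. lin_sat (V - E) C' u \<longleftrightarrow> (\<exists>u'. (\<forall>i\<in>V - E. u' i = u i) \<and> lin_sat V C u'))"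
proof -
  have "finite E" using assms finite_subset by blast
  from this assms(3) show ?thesis
  proof (induction E rule: finite_induct)
    case empty
    have "lin_sat (V - {}) C u \<longleftrightarrow> (\<exists>u'. (\<forall>i\<in>V - {}. u' i = u i) \<and> lin_sat V C u')" for u
      by (metis Diff_empty lin_sat_cong)
    then show ?case using assms(2) by blast
  next
    case (insert x E)
    then obtain C1 where C1: "finite C1"
      "\<And>u. lin_sat (V - E) C1 u \<longleftrightarrow> (\<exists>u'. (\<forall>i\<in>V - E. u' i = u i) \<and> lin_sat V C u')"
      by blast
    have x: "x \<in> V - E" and V: "V - insert x E = V - E - {x}" using insert by auto
    have "lin_sat (V - insert x E) (fm_eliminate x C1) u
      \<longleftrightarrow> (\<exists>u'. (\<forall>i\<in>V - insert x E. u' i = u i) \<and> lin_sat V C u')" for u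
    proof -
      have "lin_sat (V - insert x E) (fm_eliminate x C1) u \<longleftrightarrow> (\<exists>r. lin_sat (V - E) C1 (u(x := r)))"
        unfolding V using lin_sat_fm_eliminate_iff[OF _ x C1(1)] assms(1) by blast
      also have "\<dots> \<longleftrightarrow> (\<exists>r u'. (\<forall>i\<in>V - E. u' i = (u(x := r)) i) \<and> lin_sat V C u')"
        unfolding C1(2) ..
      also have "\<dots> \<longleftrightarrow> (\<exists>u'. (\<forall>i\<in>V - insert x E. u' i = u i) \<and> lin_sat V C u')"
        unfolding V by (rule ex_agree_on_fun_upd[OF x])
      finally show ?thesis .
    qed
    then show ?case using finite_fm_eliminate[OF C1(1)] by blast
  qed
qed

section \<open>Piecewise affine functions\<close>

definition piecewise_affine_on :: "real \<Rightarrow> real \<Rightarrow> (real \<Rightarrow> real) \<Rightarrow> bool" where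
  "piecewise_affine_on lo hi f \<longleftrightarrow> (\<exists>K::nat. K \<ge> 1 \<and> (\<exists>e :: nat \<Rightarrow> real.
      e 0 = lo \<and> e K = hi
    \<and> (\<forall>i<K. e i \<le> e (Suc i))
    \<and> (\<forall>i\<in>{1..K}. \<exists>a b :: real. \<forall>x\<in>{e (i - 1)..e i}. f x = a * x + b)))"

lemma piecewise_affine_on_cong:
  assumes "piecewise_affine_on lo hi f" "\<And>x. lo \<le> x \<Longrightarrow> x \<le> hi \<Longrightarrow> f x = g x"
  shows "piecewise_affine_on lo hi g"
proof -
  obtain K e where K: "K \<ge> 1" "e 0 = lo" "e K = hi" and mono: "\<forall>i<K. e i \<le> e (Suc i)"
    and pieces: "\<forall>i\<in>{1..K}. \<exists>a b :: real. \<forall>x\<in>{e (i - 1)..e i}. f x = a * x + b"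
    using assms(1) unfolding piecewise_affine_on_def by blast
  have "\<exists>a b :: real. \<forall>x\<in>{e (i - 1)..e i}. g x = a * x + b" if i: "i \<in> {1..K}" for i
  proof -
    have "e m \<le> e n" if "m \<le> n" "n \<le> K" for m n
      by (rule lift_Suc_mono_le_ivl[of "{..<K}"]) (use mono that in auto)
    then have "lo \<le> e (i - 1)" "e i \<le> hi" using i K by auto
    then show ?thesis using pieces i assms(2) by fastforce
  qed
  then show ?thesis unfolding piecewise_affine_on_def using K mono by blast
qed

lemma piecewise_affine_on_affine:
  assumes "lo \<le> hi"
  shows "piecewise_affine_on lo hi (\<lambda>x. a * x + b)"
  unfolding piecewise_affine_on_def
  using assms by (intro exI[of _ 1] conjI exI[of _ "\<lambda>i. if i = 0 then lo else hi"]) auto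

lemma piecewise_affine_on_point: "piecewise_affine_on x x f"
  by (rule piecewise_affine_on_cong[OF piecewise_affine_on_affine[of x x 0 "f x"]]) auto

lemma piecewise_affine_on_concat:
  assumes "piecewise_affine_on a b f" "piecewise_affine_on b c f"
  shows "piecewise_affine_on a c f"
proof -
  obtain K1 e1 where K1: "K1 \<ge> 1" "e1 0 = a" "e1 K1 = b" "\<forall>i<K1. e1 i \<le> e1 (Suc i)"
    "\<forall>i\<in>{1..K1}. \<exists>a b :: real. \<forall>x\<in>{e1 (i - 1)..e1 i}. f x = a * x + b"
    using assms(1) unfolding piecewise_affine_on_def by blast
  obtain K2 e2 where K2: "K2 \<ge> 1" "e2 0 = b" "e2 K2 = c" "\<forall>i<K2. e2 i \<le> e2 (Suc i)"
    "\<forall>i\<in>{1..K2}. \<exists>a b :: real. \<forall>x\<in>{e2 (i - 1)..e2 i}. f x = a * x + b"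
    using assms(2) unfolding piecewise_affine_on_def by blast
  define e where "e i = (if i \<le> K1 then e1 i else e2 (i - K1))" for i
  have e_right: "e i = e2 (i - K1)" if "i \<ge> K1" for i
    using that K1(3) K2(2) unfolding e_def by auto
  have "e i \<le> e (Suc i)" if "i < K1 + K2" for i
  proof (cases "i < K1")
    case True
    then show ?thesis using K1(4) unfolding e_def by auto
  next
    case False
    then show ?thesis
      using K2(4) that e_right[of i] e_right[of "Suc i"] by (auto simp: Suc_diff_le)
  qed
  moreover have "\<exists>a b :: real. \<forall>x\<in>{e (i - 1)..e i}. f x = a * x + b" if i: "i \<in> {1..K1 + K2}" for i
  proof (cases "i \<le> K1")
    case True
    then show ?thesis using K1(5) i unfolding e_def by auto
  next
    case False
    then have "e (i - 1) = e2 (i - K1 - 1)" "e i = e2 (i - K1)" "i - K1 \<in> {1..K2}"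
      using e_right i by auto
    then show ?thesis using K2(5) by metis
  qed
  ultimately show ?thesis
    unfolding piecewise_affine_on_def using K1(1,2) K2(3) e_right[of "K1 + K2"]
    by (intro exI[of _ "K1 + K2"] conjI exI[of _ e]) (auto simp: e_def)
qed

lemma piecewise_affine_on_two_pieces:
  assumes "lo \<le> hi" "\<forall>x\<le>c. f x = a1 * x + b1" "\<forall>x\<ge>c. f x = a2 * x + b2"
  shows "piecewise_affine_on lo hi f"
proof (cases "c \<le> lo")
  case True
  show ?thesis
    by (rule piecewise_affine_on_cong[OF piecewise_affine_on_affine[OF assms(1)]])
      (use assms(3) True in auto)
next
  case lo: False
  show ?thesis
  proof (cases "hi \<le> c")
    case True
    show ?thesis
      by (rule piecewise_affine_on_cong[OF piecewise_affine_on_affine[OF assms(1)]])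
        (use assms(2) True in auto)
  next
    case False
    have "piecewise_affine_on lo c f"
      by (rule piecewise_affine_on_cong[OF piecewise_affine_on_affine[of lo c a1 b1]])
        (use assms(2) lo in auto)
    moreover have "piecewise_affine_on c hi f"
      by (rule piecewise_affine_on_cong[OF piecewise_affine_on_affine[of c hi a2 b2]])
        (use assms(3) False in auto)
    ultimately show ?thesis by (rule piecewise_affine_on_concat)
  qed
qed

lemma piecewise_affine_on_min_affine_affine:
  assumes "lo \<le> hi"
  shows "piecewise_affine_on lo hi (\<lambda>x. min (a1 * x + b1) (a2 * x + b2))"
proof (cases "a1 = a2")
  case True
  show ?thesis
    by (rule piecewise_affine_on_cong[OF piecewise_affine_on_affine[OF assms, of a1 "min b1 b2"]])
      (simp add: True min_add_distrib_left)
next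
  case False
  define c where "c = (b2 - b1) / (a1 - a2)"
  have diff: "(a1 * x + b1) - (a2 * x + b2) = (a1 - a2) * (x - c)" for x
    using False unfolding c_def by (simp add: field_simps)
  have "min (a1 * x + b1) (a2 * x + b2) = (if a2 < a1 then a1 else a2) * x + (if a2 < a1 then b1 else b2)"
    if "x \<le> c" for x
  proof (cases "a2 < a1")
    case True
    then have "(a1 - a2) * (x - c) \<le> 0" using that by (intro mult_nonneg_nonpos) auto
    then show ?thesis using diff[of x] True by (simp add: min_def)
  next
    case False
    then have "0 \<le> (a1 - a2) * (x - c)" using that by (intro mult_nonpos_nonpos) auto
    then show ?thesis using diff[of x] False by (simp add: min_def)
  qed
  moreover have "min (a1 * x + b1) (a2 * x + b2) = (if a2 < a1 then a2 else a1) * x + (if a2 < a1 then b2 else b1)"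
    if "x \<ge> c" for x
  proof (cases "a2 < a1")
    case True
    then have "0 \<le> (a1 - a2) * (x - c)" using that by (intro mult_nonneg_nonneg) auto
    then show ?thesis using diff[of x] True by (simp add: min_def)
  next
    case False
    then have "(a1 - a2) * (x - c) \<le> 0" using that by (intro mult_nonpos_nonneg) auto
    then show ?thesis using diff[of x] False by (simp add: min_def)
  qed
  ultimately show ?thesis
    using assms by (intro piecewise_affine_on_two_pieces) auto
qed

lemma piecewise_affine_on_min_affine:
  assumes "piecewise_affine_on lo hi f"
  shows "piecewise_affine_on lo hi (\<lambda>x. min (f x) (a * x + b))"
proof -
  obtain K e where K: "K \<ge> 1" "e 0 = lo" "e K = hi" "\<forall>i<K. e i \<le> e (Suc i)"
    "\<forall>i\<in>{1..K}. \<exists>a b :: real. \<forall>x\<in>{e (i - 1)..e i}. f x = a * x + b"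
    using assms unfolding piecewise_affine_on_def by blast
  have "k \<le> K \<Longrightarrow> piecewise_affine_on (e 0) (e k) (\<lambda>x. min (f x) (a * x + b))" for k
  proof (induction k)
    case 0
    show ?case by (rule piecewise_affine_on_point)
  next
    case (Suc k)
    have "Suc k \<in> {1..K}" using Suc.prems by simp
    then obtain a1 b1 where piece: "\<forall>x\<in>{e k..e (Suc k)}. f x = a1 * x + b1"
      using K(5) by fastforce
    have "e k \<le> e (Suc k)" using K(4) Suc.prems by auto
    then have "piecewise_affine_on (e k) (e (Suc k)) (\<lambda>x. min (f x) (a * x + b))"
      by (rule piecewise_affine_on_cong[OF piecewise_affine_on_min_affine_affine]) (use piece in auto)
    with Suc show ?case by (auto intro: piecewise_affine_on_concat)
  qed
  from this[of K] show ?thesis using K by simp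
qed

lemma piecewise_affine_on_Min_affine:
  assumes "finite I" "I \<noteq> {}" "lo \<le> hi"
  shows "piecewise_affine_on lo hi (\<lambda>x. Min ((\<lambda>i. a i * x + b i) ` I))"
  using assms(1,2)
proof (induction I rule: finite_ne_induct)
  case (singleton j)
  then show ?case using piecewise_affine_on_affine[OF assms(3)] by simp
next
  case (insert j I)
  then show ?case
    using piecewise_affine_on_min_affine[OF insert.IH, of "a j" "b j"] by (simp add: min.commute)
qed

lemma halflines_mem_if_ge:
  fixes C :: "(real \<times> real) set"
  assumes "t0 \<in> {t. \<forall>(b, d)\<in>C. b * t \<le> d}" "t0 \<le> t" "\<forall>p\<in>C. fst p > 0 \<longrightarrow> fst p * t \<le> snd p"
  shows "t \<in> {t. \<forall>(b, d)\<in>C. b * t \<le> d}"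
proof (clarify)
  fix b d assume bd: "(b, d) \<in> C"
  show "b * t \<le> d"
  proof (cases "b > 0")
    case True
    then show ?thesis using assms(3) bd by fastforce
  next
    case False
    then have "b * t \<le> b * t0" using assms(2) by (intro mult_left_mono_neg) auto
    also have "\<dots> \<le> d" using assms(1) bd by blast
    finally show ?thesis .
  qed
qed

lemma Sup_halflines_eq_Min:
  fixes C :: "(real \<times> real) set"
  assumes "finite C" and S: "S = {t. \<forall>(b, d)\<in>C. b * t \<le> d}" and "t0 \<in> S" "\<forall>t\<in>S. t \<le> B"
  shows "{p\<in>C. fst p > 0} \<noteq> {} \<and> Sup S = Min ((\<lambda>p. snd p / fst p) ` {p\<in>C. fst p > 0})"
proof -
  define Cpos where "Cpos = {p\<in>C. fst p > 0}"
  define U where "U = Min ((\<lambda>p. snd p / fst p) ` Cpos)"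
  note in_S = halflines_mem_if_ge[OF \<open>t0 \<in> S\<close>[unfolded S], folded S]
  have Cpos_ne: "Cpos \<noteq> {}"
  proof
    assume "Cpos = {}"
    then have "max t0 (B + 1) \<in> S" unfolding Cpos_def by (intro in_S) auto
    then show False using assms(4) by fastforce
  qed
  have "finite Cpos" unfolding Cpos_def using assms(1) by simp
  then have fin: "finite ((\<lambda>p. snd p / fst p) ` Cpos)" by simp
  have le_U: "t \<le> U" if "t \<in> S" for t
  proof -
    have "t \<le> snd p / fst p" if "p \<in> Cpos" for p
      using \<open>t \<in> S\<close> that unfolding S Cpos_def by (auto simp: pos_le_divide_eq mult.commute)
    then show ?thesis unfolding U_def using fin Cpos_ne by (simp add: Min_ge_iff)
  qed
  have "U \<le> snd p / fst p" if "p \<in> Cpos" for p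
    unfolding U_def using fin that by (intro Min_le) auto
  then have "U \<in> S"
    using le_U[OF \<open>t0 \<in> S\<close>] unfolding Cpos_def
    by (intro in_S) (auto simp: pos_le_divide_eq mult.commute)
  then have "Sup S = U" using le_U by (intro cSup_eq_maximum)
  then show ?thesis using Cpos_ne unfolding Cpos_def U_def by blast
qed

lemma Sup_section_eq_Min:
  fixes C :: "(real \<times> real \<times> real) set"
  assumes "finite C" and S: "S = {t. \<forall>(a, b, d)\<in>C. a * x + b * t \<le> d}" and "t0 \<in> S" "\<forall>t\<in>S. t \<le> B"
  shows "{i\<in>C. fst (snd i) > 0} \<noteq> {} \<and> Sup S = Min ((\<lambda>i. - fst i / fst (snd i) * x
    + snd (snd i) / fst (snd i)) ` {i\<in>C. fst (snd i) > 0})"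
proof -
  define slice :: "real \<times> real \<times> real \<Rightarrow> real \<times> real"
    where "slice i = (fst (snd i), snd (snd i) - fst i * x)" for i
  have fst_slice: "fst (slice i) = fst (snd i)" for i by (simp add: slice_def)
  have "S = {t. \<forall>(b, d)\<in>slice ` C. b * t \<le> d}"
    unfolding S slice_def by (auto simp: algebra_simps)
  from Sup_halflines_eq_Min[OF finite_imageI[OF assms(1)] this assms(3,4)]
  have "{p\<in>slice ` C. fst p > 0} \<noteq> {}"
    "Sup S = Min ((\<lambda>p. snd p / fst p) ` {p\<in>slice ` C. fst p > 0})"
    by auto
  moreover have "{p\<in>slice ` C. fst p > 0} = slice ` {i\<in>C. fst (snd i) > 0}"
  proof (intro equalityI subsetI)
    fix p assume "p \<in> {p\<in>slice ` C. fst p > 0}"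
    then obtain i where "i \<in> C" "p = slice i" "fst p > 0" by blast
    then show "p \<in> slice ` {i\<in>C. fst (snd i) > 0}" using fst_slice by simp
  next
    fix p assume "p \<in> slice ` {i\<in>C. fst (snd i) > 0}"
    then obtain i where "i \<in> C" "fst (snd i) > 0" "p = slice i" by blast
    then show "p \<in> {p\<in>slice ` C. fst p > 0}" using fst_slice by simp
  qed
  moreover have "snd (slice i) / fst (slice i) = - fst i / fst (snd i) * x + snd (snd i) / fst (snd i)" for i
    unfolding slice_def by (simp add: diff_divide_distrib)
  ultimately show ?thesis by (simp add: image_image)
qed

section \<open>Guessing probabilities and channel reduction\<close>

lemma Pc_X_le_Pc_X_given_Y:
  assumes "M \<ge> 1"
  shows "Pc_X M N P \<le> Pc_X_given_Y M N P"
proof -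
  have "(\<Sum>y=1..N. P x y) \<le> (\<Sum>y=1..N. Max ((\<lambda>x. P x y) ` {1..M}))" if "x \<in> {1..M}" for x
    using that by (intro sum_mono Max_ge) auto
  then show ?thesis unfolding Pc_X_def Pc_X_given_Y_def using assms by (subst Max_le_iff) auto
qed

definition prob_Y_eq_Z :: "nat \<Rightarrow> nat \<Rightarrow> (nat \<Rightarrow> nat \<Rightarrow> real) \<Rightarrow> (nat \<Rightarrow> nat \<Rightarrow> real) \<Rightarrow> real" where
  "prob_Y_eq_Z M N P W = (\<Sum>y=1..N. (\<Sum>x=1..M. P x y) * W y y)"

lemma prob_Y_eq_Z_le_Pc_Y_given_Z: "prob_Y_eq_Z M N P W \<le> Pc_Y_given_Z M N P N W"
  unfolding prob_Y_eq_Z_def Pc_Y_given_Z_def sum_distrib_right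
  by (intro sum_mono Max_ge) auto

lemma Pc_Y_given_Z_le_1:
  assumes "joint_pmf M N P" "channel N L W" "N \<ge> 1"
  shows "Pc_Y_given_Z M N P L W \<le> 1"
proof -
  have nonneg: "0 \<le> (\<Sum>x=1..M. P x y * W y z)" if "y \<in> {1..N}" "z \<in> {1..L}" for y z
    using assms(1,2) that unfolding joint_pmf_def channel_def by (intro sum_nonneg) auto
  have "Max ((\<lambda>y. \<Sum>x=1..M. P x y * W y z) ` {1..N}) \<le> (\<Sum>y=1..N. \<Sum>x=1..M. P x y * W y z)"
    if "z \<in> {1..L}" for z
    using assms(3) nonneg that by (subst Max_le_iff) (auto intro!: member_le_sum)
  then have "Pc_Y_given_Z M N P L W \<le> (\<Sum>z=1..L. \<Sum>y=1..N. \<Sum>x=1..M. P x y * W y z)"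
    unfolding Pc_Y_given_Z_def by (rule sum_mono)
  also have "\<dots> = (\<Sum>y=1..N. \<Sum>x=1..M. \<Sum>z=1..L. P x y * W y z)"
    by (subst sum.swap, rule sum.cong[OF refl], rule sum.swap)
  also have "\<dots> = (\<Sum>y=1..N. \<Sum>x=1..M. P x y * (\<Sum>z=1..L. W y z))"
    by (simp add: sum_distrib_left)
  also have "\<dots> = (\<Sum>y=1..N. \<Sum>x=1..M. P x y)"
    using assms(2) unfolding channel_def by simp
  also have "\<dots> = (\<Sum>x=1..M. \<Sum>y=1..N. P x y)"
    by (rule sum.swap)
  also have "\<dots> = 1" using assms(1) unfolding joint_pmf_def by simp
  finally show ?thesis .
qed

lemma channel_constant: "L \<ge> 1 \<Longrightarrow> channel N L (\<lambda>y z. of_bool (z = 1))"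
  unfolding channel_def by auto

lemma Pc_X_given_Z_constant:
  assumes "M \<ge> 1" "L \<ge> 1"
  shows "Pc_X_given_Z M N P L (\<lambda>y z. of_bool (z = 1)) = Pc_X M N P"
proof -
  have "Max ((\<lambda>x. \<Sum>y=1..N. P x y * of_bool (z = 1)) ` {1..M}) = (if z = 1 then Pc_X M N P else 0)"
    for z :: nat
    unfolding Pc_X_def using assms by (cases "z = 1") auto
  then show ?thesis unfolding Pc_X_given_Z_def using assms by simp
qed

definition merge_channel :: "nat \<Rightarrow> (nat \<Rightarrow> nat) \<Rightarrow> (nat \<Rightarrow> nat \<Rightarrow> real) \<Rightarrow> nat \<Rightarrow> nat \<Rightarrow> real" where
  "merge_channel L g W y y' = (\<Sum>z\<in>{z\<in>{1..L}. g z = y'}. W y z)"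

lemma sum_fibres:
  fixes g :: "nat \<Rightarrow> nat" and h :: "nat \<Rightarrow> 'a::comm_monoid_add"
  shows "g ` {1..L} \<subseteq> {1..N} \<Longrightarrow> (\<Sum>y'=1..N. \<Sum>z\<in>{z\<in>{1..L}. g z = y'}. h z) = (\<Sum>z=1..L. h z)"
  by (rule sum.group) simp_all

lemma channel_merge_channel:
  assumes "channel N L W" "g ` {1..L} \<subseteq> {1..N}"
  shows "channel N N (merge_channel L g W)"
  using assms unfolding channel_def merge_channel_def sum_fibres[OF assms(2)]
  by (auto intro!: sum_nonneg)

lemma Pc_X_given_Z_merge_channel_le:
  assumes "M \<ge> 1" "g ` {1..L} \<subseteq> {1..N}"
  shows "Pc_X_given_Z M N P N (merge_channel L g W) \<le> Pc_X_given_Z M N P L W"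
proof -
  let ?m = "\<lambda>z. Max ((\<lambda>x. \<Sum>y=1..N. P x y * W y z) ` {1..M})"
  have "(\<Sum>y=1..N. P x y * merge_channel L g W y y') \<le> (\<Sum>z\<in>{z\<in>{1..L}. g z = y'}. ?m z)"
    if "x \<in> {1..M}" for x y'
  proof -
    have "(\<Sum>y=1..N. P x y * merge_channel L g W y y') = (\<Sum>z\<in>{z\<in>{1..L}. g z = y'}. \<Sum>y=1..N. P x y * W y z)"
      unfolding merge_channel_def sum_distrib_left by (rule sum.swap)
    also have "\<dots> \<le> (\<Sum>z\<in>{z\<in>{1..L}. g z = y'}. ?m z)"
      using that by (intro sum_mono Max_ge) auto
    finally show ?thesis .
  qed
  then have "Max ((\<lambda>x. \<Sum>y=1..N. P x y * merge_channel L g W y y') ` {1..M})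
      \<le> (\<Sum>z\<in>{z\<in>{1..L}. g z = y'}. ?m z)" for y'
    using assms(1) by (subst Max_le_iff) auto
  then have "Pc_X_given_Z M N P N (merge_channel L g W) \<le> (\<Sum>y'=1..N. \<Sum>z\<in>{z\<in>{1..L}. g z = y'}. ?m z)"
    unfolding Pc_X_given_Z_def by (rule sum_mono)
  also have "\<dots> = Pc_X_given_Z M N P L W"
    unfolding sum_fibres[OF assms(2)] Pc_X_given_Z_def ..
  finally show ?thesis .
qed

lemma prob_Y_eq_Z_merge_channel:
  assumes "N \<ge> 1" "g ` {1..L} \<subseteq> {1..N}"
    and MAP: "\<And>y z. z \<in> {1..L} \<Longrightarrow> y \<in> {1..N} \<Longrightarrow>
      (\<Sum>x=1..M. P x y * W y z) \<le> (\<Sum>x=1..M. P x (g z) * W (g z) z)"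
  shows "prob_Y_eq_Z M N P (merge_channel L g W) = Pc_Y_given_Z M N P L W"
proof -
  have "prob_Y_eq_Z M N P (merge_channel L g W)
      = (\<Sum>y'=1..N. \<Sum>z\<in>{z\<in>{1..L}. g z = y'}. \<Sum>x=1..M. P x y' * W y' z)"
    unfolding prob_Y_eq_Z_def merge_channel_def
    by (simp add: sum_distrib_left sum_distrib_right sum.swap[of _ "{1..M}"] mult.commute)
  also have "\<dots> = (\<Sum>y'=1..N. \<Sum>z\<in>{z\<in>{1..L}. g z = y'}. \<Sum>x=1..M. P x (g z) * W (g z) z)"
    by (intro sum.cong) auto
  also have "\<dots> = (\<Sum>z=1..L. \<Sum>x=1..M. P x (g z) * W (g z) z)"
    by (rule sum_fibres[OF assms(2)])
  also have "\<dots> = Pc_Y_given_Z M N P L W"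
  proof -
    have "Max ((\<lambda>y. \<Sum>x=1..M. P x y * W y z) ` {1..N}) = (\<Sum>x=1..M. P x (g z) * W (g z) z)"
      if z: "z \<in> {1..L}" for z
    proof (rule Max_eqI)
      have "g z \<in> {1..N}" using assms(2) z by blast
      then show "(\<Sum>x=1..M. P x (g z) * W (g z) z) \<in> (\<lambda>y. \<Sum>x=1..M. P x y * W y z) ` {1..N}"
        by (rule rev_image_eqI) simp
    qed (use MAP z in auto)
    then show ?thesis unfolding Pc_Y_given_Z_def by (intro sum.cong) auto
  qed
  finally show ?thesis .
qed

lemma exists_maximizer_fun:
  fixes f :: "nat \<Rightarrow> nat \<Rightarrow> real"
  assumes "N \<ge> 1"
  shows "\<exists>g. g ` {1..L} \<subseteq> {1..N} \<and> (\<forall>z\<in>{1..L}. \<forall>y\<in>{1..N}. f y z \<le> f (g z) z)"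
proof -
  have "\<exists>y. y \<in> {1..N} \<and> (\<forall>y'\<in>{1..N}. f y' z \<le> f y z)" for z
  proof -
    have "Max ((\<lambda>y. f y z) ` {1..N}) \<in> (\<lambda>y. f y z) ` {1..N}" using assms by (intro Max_in) auto
    then obtain y where "y \<in> {1..N}" "f y z = Max ((\<lambda>y. f y z) ` {1..N})" by auto
    then show ?thesis by (auto intro!: Max_ge)
  qed
  then obtain g where "\<forall>z. g z \<in> {1..N} \<and> (\<forall>y'\<in>{1..N}. f y' z \<le> f (g z) z)"
    using choice[of "\<lambda>z y. y \<in> {1..N} \<and> (\<forall>y'\<in>{1..N}. f y' z \<le> f y z)"] by blast
  then show ?thesis by blast
qed

lemma channel_reduction:
  assumes "channel N L W" "M \<ge> 1" "N \<ge> 1"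
  obtains W' where "channel N N W'" "Pc_X_given_Z M N P N W' \<le> Pc_X_given_Z M N P L W"
    "prob_Y_eq_Z M N P W' = Pc_Y_given_Z M N P L W"
proof -
  obtain g where g: "g ` {1..L} \<subseteq> {1..N}"
    "\<forall>z\<in>{1..L}. \<forall>y\<in>{1..N}. (\<Sum>x=1..M. P x y * W y z) \<le> (\<Sum>x=1..M. P x (g z) * W (g z) z)"
    using exists_maximizer_fun[OF assms(3), of L "\<lambda>y z. \<Sum>x=1..M. P x y * W y z"] by blast
  show ?thesis
    using that channel_merge_channel[OF assms(1) g(1)] Pc_X_given_Z_merge_channel_le[OF assms(2) g(1)]
      prob_Y_eq_Z_merge_channel[OF assms(3) g(1)] g(2) by blast
qed

definition achievable :: "nat \<Rightarrow> nat \<Rightarrow> (nat \<Rightarrow> nat \<Rightarrow> real) \<Rightarrow> real \<Rightarrow> real \<Rightarrow> bool" where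
  "achievable M N P \<epsilon> t \<longleftrightarrow>
     (\<exists>W. channel N N W \<and> Pc_X_given_Z M N P N W \<le> \<epsilon> \<and> prob_Y_eq_Z M N P W = t)"

lemma achievable_constant_channel:
  assumes "joint_pmf M N P" "M \<ge> 1" "N \<ge> 1" "Pc_X M N P \<le> \<epsilon>"
  shows "achievable M N P \<epsilon> (prob_Y_eq_Z M N P (\<lambda>y z. of_bool (z = 1)))"
  unfolding achievable_def
  using channel_constant[OF assms(3)] Pc_X_given_Z_constant[OF assms(2,3)] assms(4)
  by (intro exI[of _ "\<lambda>y z. of_bool (z = 1)"]) auto

lemma achievable_le_1:
  assumes "joint_pmf M N P" "N \<ge> 1" "achievable M N P \<epsilon> t"
  shows "t \<le> 1"
proof -
  obtain W where "channel N N W" "t = prob_Y_eq_Z M N P W"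
    using assms(3) unfolding achievable_def by auto
  then show ?thesis
    using prob_Y_eq_Z_le_Pc_Y_given_Z[of M N P W] Pc_Y_given_Z_le_1[OF assms(1) _ assms(2)] by force
qed

lemma hfun_eq_Sup_achievable:
  assumes "joint_pmf M N P" "M \<ge> 1" "N \<ge> 1" "Pc_X M N P \<le> \<epsilon>"
  shows "hfun M N P \<epsilon> = Sup (Collect (achievable M N P \<epsilon>))"
proof -
  let ?H = "{Pc_Y_given_Z M N P L W | L W. channel N L W \<and> Pc_X_given_Z M N P L W \<le> \<epsilon>}"
  let ?A = "Collect (achievable M N P \<epsilon>)"
  note A0 = achievable_constant_channel[OF assms]
  have H_le_1: "h \<le> 1" if "h \<in> ?H" for h
    using that Pc_Y_given_Z_le_1[OF assms(1) _ assms(3)] by auto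
  have "Sup ?H \<le> Sup ?A"
  proof (rule cSup_least)
    show "?H \<noteq> {}" using A0 unfolding achievable_def by blast
    fix h assume "h \<in> ?H"
    then obtain L W where W: "channel N L W" "Pc_X_given_Z M N P L W \<le> \<epsilon>" "h = Pc_Y_given_Z M N P L W"
      by blast
    obtain W' where "channel N N W'" "Pc_X_given_Z M N P N W' \<le> Pc_X_given_Z M N P L W"
      "prob_Y_eq_Z M N P W' = Pc_Y_given_Z M N P L W"
      using channel_reduction[OF W(1) assms(2,3)] .
    then have "h \<in> ?A" unfolding achievable_def using W by auto
    moreover have "bdd_above ?A" using achievable_le_1[OF assms(1,3)] by (intro bdd_aboveI[of _ 1]) blast
    ultimately show "h \<le> Sup ?A" by (rule cSup_upper)
  qed
  moreover have "Sup ?A \<le> Sup ?H"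
  proof (rule cSup_least)
    show "?A \<noteq> {}" using A0 by blast
    fix t assume "t \<in> ?A"
    then obtain W where W: "channel N N W" "Pc_X_given_Z M N P N W \<le> \<epsilon>" "t = prob_Y_eq_Z M N P W"
      unfolding achievable_def by auto
    moreover have "bdd_above ?H" using H_le_1 by (intro bdd_aboveI[of _ 1]) blast
    ultimately have "Pc_Y_given_Z M N P N W \<le> Sup ?H" by (intro cSup_upper) auto
    then show "t \<le> Sup ?H" using prob_Y_eq_Z_le_Pc_Y_given_Z[of M N P W] W(3) by linarith
  qed
  ultimately show ?thesis unfolding hfun_def by linarith
qed

section \<open>The linear program\<close>

(* Veps and Vsucc stand for epsilon and t, Vchan y z for the channel entry W y z, and Vmax z for
   an upper bound on max_x sum_y P x y * W y z. *)
datatype lp_var = Veps | Vsucc | Vchan nat nat | Vmax nat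

definition lp_vars :: "nat \<Rightarrow> lp_var set" where
  "lp_vars N = {Veps, Vsucc} \<union> (\<lambda>(y, z). Vchan y z) ` ({1..N} \<times> {1..N}) \<union> Vmax ` {1..N}"

lemma finite_lp_vars: "finite (lp_vars N)"
  unfolding lp_vars_def by auto

lemma sum_lp_vars:
  "(\<Sum>v\<in>lp_vars N. f v)
     = f Veps + f Vsucc + (\<Sum>y=1..N. \<Sum>z=1..N. f (Vchan y z)) + (\<Sum>z=1..N. f (Vmax z))"
proof -
  have "inj_on (\<lambda>(y, z). Vchan y z) ({1..N} \<times> {1..N})" "inj_on Vmax {1..N}"
    by (auto simp: inj_on_def)
  then have "(\<Sum>v\<in>lp_vars N. f v) = f Veps + f Vsucc + (\<Sum>(y, z)\<in>{1..N} \<times> {1..N}. f (Vchan y z))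
      + (\<Sum>z=1..N. f (Vmax z))"
    unfolding lp_vars_def
    by (subst sum.union_disjoint; (subst sum.union_disjoint)?)
      (auto simp: sum.reindex case_prod_unfold)
  then show ?thesis by (simp add: sum.cartesian_product)
qed

definition lp_constraints :: "nat \<Rightarrow> nat \<Rightarrow> (nat \<Rightarrow> nat \<Rightarrow> real) \<Rightarrow> ((lp_var \<Rightarrow> real) \<times> real) set" where
  "lp_constraints M N P =
     (\<lambda>(y, z). ((\<lambda>v. if v = Vchan y z then -1 else 0), 0)) ` ({1..N} \<times> {1..N})
   \<union> (\<Union>y\<in>{1..N}. lin_eq (\<lambda>v. case v of Vchan y' z \<Rightarrow> if y' = y then 1 else 0 | _ \<Rightarrow> 0) 1)
   \<union> (\<lambda>(x, z). ((\<lambda>v. case v of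
         Vchan y z' \<Rightarrow> if z' = z then P x y else 0
       | Vmax z' \<Rightarrow> if z' = z then -1 else 0
       | _ \<Rightarrow> 0), 0)) ` ({1..M} \<times> {1..N})
   \<union> {((\<lambda>v. case v of Vmax z \<Rightarrow> 1 | Veps \<Rightarrow> -1 | _ \<Rightarrow> 0), 0)}
   \<union> lin_eq (\<lambda>v. case v of
         Vsucc \<Rightarrow> -1
       | Vchan y z \<Rightarrow> if y = z then (\<Sum>x=1..M. P x y) else 0
       | _ \<Rightarrow> 0) 0"

lemma finite_lp_constraints: "finite (lp_constraints M N P)"
  unfolding lp_constraints_def lin_eq_def by auto

lemma lin_sat_lp_constraints:
  "lin_sat (lp_vars N) (lp_constraints M N P) u \<longleftrightarrow>
     (\<forall>y\<in>{1..N}. \<forall>z\<in>{1..N}. 0 \<le> u (Vchan y z))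
   \<and> (\<forall>y\<in>{1..N}. (\<Sum>z=1..N. u (Vchan y z)) = 1)
   \<and> (\<forall>x\<in>{1..M}. \<forall>z\<in>{1..N}. (\<Sum>y=1..N. P x y * u (Vchan y z)) \<le> u (Vmax z))
   \<and> (\<Sum>z=1..N. u (Vmax z)) \<le> u Veps
   \<and> u Vsucc = (\<Sum>y=1..N. (\<Sum>x=1..M. P x y) * u (Vchan y y))"
proof -
  have if_mult: "(if b then a else 0) * c = (if b then a * c else (0::real))" for b a c
    by simp
  have sum_if_const: "(\<Sum>z\<in>S. if b then f z else (0::real)) = (if b then sum f S else 0)" for b f S
    by simp
  have "Vchan y z \<in> lp_vars N" if "y \<in> {1..N}" "z \<in> {1..N}" for y z
    using that unfolding lp_vars_def by auto
  then have nonneg_row: "(\<Sum>v\<in>lp_vars N. (if v = Vchan y z then -1 else 0) * u v) = - u (Vchan y z)"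
    if "y \<in> {1..N}" "z \<in> {1..N}" for y z
    using that by (simp only: if_mult sum.delta finite_lp_vars) simp
  have stochastic_row: "(\<Sum>v\<in>lp_vars N. (case v of Vchan y' z \<Rightarrow> if y' = y then 1 else 0 | _ \<Rightarrow> 0) * u v)
      = (\<Sum>z=1..N. u (Vchan y z))" if "y \<in> {1..N}" for y
    unfolding sum_lp_vars using that by (simp add: if_mult sum_if_const)
  have maximum_row: "(\<Sum>v\<in>lp_vars N. (case v of
         Vchan y z' \<Rightarrow> if z' = z then P x y else 0
       | Vmax z' \<Rightarrow> if z' = z then -1 else 0
       | _ \<Rightarrow> 0) * u v) = (\<Sum>y=1..N. P x y * u (Vchan y z)) - u (Vmax z)" if "z \<in> {1..N}" for x z
    unfolding sum_lp_vars using that by (simp add: if_mult)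
  have budget_row: "(\<Sum>v\<in>lp_vars N. (case v of Vmax z \<Rightarrow> 1 | Veps \<Rightarrow> -1 | _ \<Rightarrow> 0) * u v)
      = (\<Sum>z=1..N. u (Vmax z)) - u Veps"
    unfolding sum_lp_vars by simp
  have success_row: "(\<Sum>v\<in>lp_vars N. (case v of
         Vsucc \<Rightarrow> -1
       | Vchan y z \<Rightarrow> if y = z then (\<Sum>x=1..M. P x y) else 0
       | _ \<Rightarrow> 0) * u v) = (\<Sum>y=1..N. (\<Sum>x=1..M. P x y) * u (Vchan y y)) - u Vsucc"
    unfolding sum_lp_vars by (simp add: if_mult)
  show ?thesis
    unfolding lp_constraints_def lin_sat_Un lin_sat_UN lin_sat_image lin_sat_singleton lin_sat_lin_eq
    by (auto simp: nonneg_row stochastic_row maximum_row budget_row success_row)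
qed

lemma ex_lp_solution_if_channel:
  assumes W: "channel N N W" "Pc_X_given_Z M N P N W \<le> \<epsilon>" "prob_Y_eq_Z M N P W = t"
  shows "\<exists>u. u Veps = \<epsilon> \<and> u Vsucc = t \<and> lin_sat (lp_vars N) (lp_constraints M N P) u"
proof -
  define u where "u v = (case v of Veps \<Rightarrow> \<epsilon> | Vsucc \<Rightarrow> t | Vchan y z \<Rightarrow> W y z
     | Vmax z \<Rightarrow> Max ((\<lambda>x. \<Sum>y=1..N. P x y * W y z) ` {1..M}))" for v
  have "lin_sat (lp_vars N) (lp_constraints M N P) u"
    unfolding lin_sat_lp_constraints
  proof (intro conjI ballI)
    fix y z assume "y \<in> {1..N}" "z \<in> {1..N}"
    then show "0 \<le> u (Vchan y z)" using W(1) unfolding channel_def u_def by simp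
  next
    fix y assume "y \<in> {1..N}"
    then show "(\<Sum>z=1..N. u (Vchan y z)) = 1" using W(1) unfolding channel_def u_def by simp
  next
    fix x z assume "x \<in> {1..M}" "z \<in> {1..N}"
    then show "(\<Sum>y=1..N. P x y * u (Vchan y z)) \<le> u (Vmax z)" unfolding u_def by simp
  next
    show "(\<Sum>z=1..N. u (Vmax z)) \<le> u Veps" using W(2) unfolding u_def Pc_X_given_Z_def by simp
  next
    show "u Vsucc = (\<Sum>y=1..N. (\<Sum>x=1..M. P x y) * u (Vchan y y))"
      using W(3) unfolding u_def prob_Y_eq_Z_def by simp
  qed
  then show ?thesis by (intro exI[of _ u]) (simp add: u_def)
qed

lemma achievable_iff_lin_sat:
  assumes "M \<ge> 1"
  shows "achievable M N P \<epsilon> t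
    \<longleftrightarrow> (\<exists>u. u Veps = \<epsilon> \<and> u Vsucc = t \<and> lin_sat (lp_vars N) (lp_constraints M N P) u)"
proof
  assume "achievable M N P \<epsilon> t"
  then obtain W where "channel N N W" "Pc_X_given_Z M N P N W \<le> \<epsilon>" "prob_Y_eq_Z M N P W = t"
    unfolding achievable_def by blast
  then show "\<exists>u. u Veps = \<epsilon> \<and> u Vsucc = t \<and> lin_sat (lp_vars N) (lp_constraints M N P) u"
    by (rule ex_lp_solution_if_channel)
next
  assume "\<exists>u. u Veps = \<epsilon> \<and> u Vsucc = t \<and> lin_sat (lp_vars N) (lp_constraints M N P) u"
  then obtain u where u: "u Veps = \<epsilon>" "u Vsucc = t"
    and nonneg: "\<forall>y\<in>{1..N}. \<forall>z\<in>{1..N}. 0 \<le> u (Vchan y z)"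
    and stochastic: "\<forall>y\<in>{1..N}. (\<Sum>z=1..N. u (Vchan y z)) = 1"
    and maximum: "\<forall>x\<in>{1..M}. \<forall>z\<in>{1..N}. (\<Sum>y=1..N. P x y * u (Vchan y z)) \<le> u (Vmax z)"
    and budget: "(\<Sum>z=1..N. u (Vmax z)) \<le> u Veps"
    and success: "u Vsucc = (\<Sum>y=1..N. (\<Sum>x=1..M. P x y) * u (Vchan y y))"
    unfolding lin_sat_lp_constraints by blast
  define W where "W y z = u (Vchan y z)" for y z
  have "Pc_X_given_Z M N P N W \<le> (\<Sum>z=1..N. u (Vmax z))"
    unfolding Pc_X_given_Z_def W_def using maximum assms by (intro sum_mono) (simp add: Max_le_iff)
  moreover have "channel N N W" unfolding channel_def W_def using nonneg stochastic by blast
  moreover have "prob_Y_eq_Z M N P W = t" unfolding prob_Y_eq_Z_def W_def using success u(2) by simp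
  ultimately show "achievable M N P \<epsilon> t" unfolding achievable_def using budget u(1) by force
qed

lemma achievable_polyhedral:
  assumes "M \<ge> 1"
  obtains C :: "(real \<times> real \<times> real) set"
  where "finite C" "\<And>\<epsilon> t. achievable M N P \<epsilon> t \<longleftrightarrow> (\<forall>(a, b, d)\<in>C. a * \<epsilon> + b * t \<le> d)"
proof -
  have kept: "lp_vars N - (lp_vars N - {Veps, Vsucc}) = {Veps, Vsucc}"
    by (rule double_diff) (auto simp: lp_vars_def)
  obtain C' where C': "finite C'"
    "\<forall>u. lin_sat {Veps, Vsucc} C' u \<longleftrightarrow>
      (\<exists>u'. (\<forall>i\<in>{Veps, Vsucc}. u' i = u i) \<and> lin_sat (lp_vars N) (lp_constraints M N P) u')"
    using fourier_motzkin[OF finite_lp_vars finite_lp_constraints[of M N P]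
        Diff_subset[of "lp_vars N" "{Veps, Vsucc}"], unfolded kept]
    by (elim exE conjE)
  define C where "C = (\<lambda>(c, d). (c Veps, c Vsucc, d)) ` C'"
  have "achievable M N P \<epsilon> t \<longleftrightarrow> (\<forall>(a, b, d)\<in>C. a * \<epsilon> + b * t \<le> d)" for \<epsilon> t
  proof -
    define u where "u v = (if v = Veps then \<epsilon> else t)" for v
    have "achievable M N P \<epsilon> t \<longleftrightarrow> lin_sat {Veps, Vsucc} C' u"
      unfolding achievable_iff_lin_sat[OF assms] C'(2)[rule_format] by (simp add: u_def)
    also have "\<dots> \<longleftrightarrow> (\<forall>(a, b, d)\<in>C. a * \<epsilon> + b * t \<le> d)"
      unfolding lin_sat_def C_def u_def by (simp add: case_prod_unfold)
    finally show ?thesis .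
  qed
  then show ?thesis using that C'(1) unfolding C_def by blast
qed

lemma hfun_eq_Min_affine:
  assumes "joint_pmf M N P" "M \<ge> 1" "N \<ge> 1"
  obtains I :: "(real \<times> real \<times> real) set" and a b :: "real \<times> real \<times> real \<Rightarrow> real"
  where "finite I" "I \<noteq> {}"
    "\<And>\<epsilon>. Pc_X M N P \<le> \<epsilon> \<Longrightarrow> hfun M N P \<epsilon> = Min ((\<lambda>i. a i * \<epsilon> + b i) ` I)"
proof -
  obtain C where C: "finite C" "\<And>\<epsilon> t. achievable M N P \<epsilon> t \<longleftrightarrow> (\<forall>(a, b, d)\<in>C. a * \<epsilon> + b * t \<le> d)"
    using achievable_polyhedral[OF assms(2)] by blast
  define I where "I = {i\<in>C. fst (snd i) > 0}"
  have hfun_Min: "I \<noteq> {} \<and> hfun M N P \<epsilon>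
      = Min ((\<lambda>i. - fst i / fst (snd i) * \<epsilon> + snd (snd i) / fst (snd i)) ` I)"
    if \<epsilon>: "Pc_X M N P \<le> \<epsilon>" for \<epsilon>
    unfolding I_def hfun_eq_Sup_achievable[OF assms \<epsilon>]
  proof (rule Sup_section_eq_Min[OF C(1)])
    show "Collect (achievable M N P \<epsilon>) = {t. \<forall>(a, b, d)\<in>C. a * \<epsilon> + b * t \<le> d}"
      using C(2) by blast
    show "prob_Y_eq_Z M N P (\<lambda>y z. of_bool (z = 1)) \<in> Collect (achievable M N P \<epsilon>)"
      using achievable_constant_channel[OF assms \<epsilon>] by simp
    show "\<forall>t\<in>Collect (achievable M N P \<epsilon>). t \<le> 1"
      using achievable_le_1[OF assms(1,3)] by simp
  qed
  show ?thesis
  proof (rule that[of I "\<lambda>i. - fst i / fst (snd i)" "\<lambda>i. snd (snd i) / fst (snd i)"])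
    show "finite I" unfolding I_def using C(1) by simp
    show "I \<noteq> {}" using hfun_Min[OF order.refl] by blast
  qed (use hfun_Min in simp)
qed

theorem theorem1:
  fixes M N :: nat and P :: "nat \<Rightarrow> nat \<Rightarrow> real"
  assumes "M \<ge> 1" and "N \<ge> 1" and "joint_pmf M N P"
  shows "\<exists>K::nat. K \<ge> 1 \<and> (\<exists>e :: nat \<Rightarrow> real.
           e 0 = Pc_X M N P \<and> e K = Pc_X_given_Y M N P
         \<and> (\<forall>i<K. e i \<le> e (Suc i))
         \<and> (\<forall>i\<in>{1..K}. \<exists>a b :: real. \<forall>\<epsilon>\<in>{e (i - 1)..e i}. hfun M N P \<epsilon> = a * \<epsilon> + b))"
proof -
  obtain I :: "(real \<times> real \<times> real) set" and a b where I: "finite I" "I \<noteq> {}"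
    and hfun_Min: "\<And>\<epsilon>. Pc_X M N P \<le> \<epsilon> \<Longrightarrow> hfun M N P \<epsilon> = Min ((\<lambda>i. a i * \<epsilon> + b i) ` I)"
    using hfun_eq_Min_affine[OF assms(3,1,2)] by blast
  have "piecewise_affine_on (Pc_X M N P) (Pc_X_given_Y M N P) (\<lambda>\<epsilon>. Min ((\<lambda>i. a i * \<epsilon> + b i) ` I))"
    using piecewise_affine_on_Min_affine[OF I Pc_X_le_Pc_X_given_Y[OF assms(1)]] .
  then have "piecewise_affine_on (Pc_X M N P) (Pc_X_given_Y M N P) (hfun M N P)"
    by (rule piecewise_affine_on_cong) (simp add: hfun_Min)
  then show ?thesis unfolding piecewise_affine_on_def .
qed

end
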